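(* Let $t\ge 2$ and let $(Q,B)$ be a Steiner system $S(t,k,m)$. Then its incidence matrix is $\lceil k/(t-1)\rceil$-decodable. Moreover, for every integer $n\ge 1$, $$m^*(n,3,3)\le \left\lceil\frac{1+\sqrt{1+24n}}{2}\right\rceil+3.$$
   Context: A Steiner system $S(t,k,m)$ is a pair $(Q,B)$ where $Q$ is a set of $m$ points and $B$ is a collection of $k$-subsets (blocks) of $Q$ such that every $t$-subset of $Q$ is contained in exactly one block. Its incidence matrix is the $|Q|\times|B|$ binary matrix whose $(i,j)$ entry is $1$ iff the $i$-th point lies in the $j$-th block. For a binary matrix $M$ and a nonempty set $S$ of its columns, $S$ is a stopping set if the submatrix formed by $S$ has no row with exactly one $1$; $s(M)$ is the minimum size of a stopping set ($+\infty$ if none). $M$ is $d$-decodable if $s(M)\ge d+1$, and $(d,k)$-decodable if moreover every column has exactly $k$ ones; $m^*(n,d,k)$ is the minimum $m$ such that an $m\times n$ $(d,k)$-decodable matrix exists. *)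

theory Defs
  imports Complex_Main "HOL-Library.Extended_Nat"
begin

text \<open>A binary matrix is given by a predicate M r c (entry is 1 iff M r c holds),
  together with its finite set of row indices R and column indices C.\<close>

definition steiner_system :: "nat \<Rightarrow> nat \<Rightarrow> nat \<Rightarrow> 'a set \<Rightarrow> 'a set set \<Rightarrow> bool" where
  "steiner_system t k m Q B \<longleftrightarrow>
     finite Q \<and> card Q = m \<and>
     (\<forall>b\<in>B. b \<subseteq> Q \<and> card b = k) \<and>
     (\<forall>T. T \<subseteq> Q \<and> card T = t \<longrightarrow> (\<exists>!b. b \<in> B \<and> T \<subseteq> b))"

text \<open>Incidence matrix: rows indexed by points, columns by blocks.\<close>
definition incidence :: "'a \<Rightarrow> 'a set \<Rightarrow> bool" where
  "incidence q b \<longleftrightarrow> q \<in> b"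

definition stopping_set :: "('r \<Rightarrow> 'c \<Rightarrow> bool) \<Rightarrow> 'r set \<Rightarrow> 'c set \<Rightarrow> 'c set \<Rightarrow> bool" where
  "stopping_set M R C S \<longleftrightarrow> S \<subseteq> C \<and> S \<noteq> {} \<and>
     (\<forall>r\<in>R. card {c\<in>S. M r c} \<noteq> 1)"

text \<open>Minimum size of a stopping set; infinity if there is none (Inf {} = \<infinity> in enat).\<close>
definition stopping_number :: "('r \<Rightarrow> 'c \<Rightarrow> bool) \<Rightarrow> 'r set \<Rightarrow> 'c set \<Rightarrow> enat" where
  "stopping_number M R C = Inf ((\<lambda>S. enat (card S)) ` {S. stopping_set M R C S})"

definition decodable :: "nat \<Rightarrow> ('r \<Rightarrow> 'c \<Rightarrow> bool) \<Rightarrow> 'r set \<Rightarrow> 'c set \<Rightarrow> bool" where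
  "decodable d M R C \<longleftrightarrow> stopping_number M R C \<ge> enat (d + 1)"

definition dk_decodable :: "nat \<Rightarrow> nat \<Rightarrow> ('r \<Rightarrow> 'c \<Rightarrow> bool) \<Rightarrow> 'r set \<Rightarrow> 'c set \<Rightarrow> bool" where
  "dk_decodable d k M R C \<longleftrightarrow> decodable d M R C \<and> (\<forall>c\<in>C. card {r\<in>R. M r c} = k)"

definition mstar :: "nat \<Rightarrow> nat \<Rightarrow> nat \<Rightarrow> nat" where
  "mstar n d k = (LEAST m. \<exists>M :: nat \<Rightarrow> nat \<Rightarrow> bool. dk_decodable d k M {0..<m} {0..<n})"

end

theory Submission
  imports Defs
begin

text \<open>If blocks of size k pairwise share at most l points, then in a stopping set S every
  point of a block b \<in> S lies in some other block of S, so b is covered by the |S| - 1 sets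
  b \<inter> b' and k \<le> (|S| - 1)l; for a Steiner system l = t - 1.

  For the bound on m*(n,3,3) take the columns to be the q^3 points of a cube, each incident
  with the three rows recording its three coordinates. In a stopping set of at most three
  columns every coordinate value that occurs must occur twice, hence each coordinate is
  constant and the set is a single column, which no row covers twice. If c is the ceiling in
  the bound then 6n \<le> c^2, so q = \<lfloor>c/3\<rfloor> + 1 satisfies n \<le> q^3 and uses 3q \<le> c + 3 rows.\<close>

lemma decodableI:
  assumes "\<And>S. stopping_set M R C S \<Longrightarrow> d < card S"
  shows "decodable d M R C"
  unfolding decodable_def stopping_number_def
proof (rule Inf_greatest)
  fix x assume "x \<in> (\<lambda>S. enat (card S)) ` {S. stopping_set M R C S}"
  then obtain S where "stopping_set M R C S" "x = enat (card S)" by blast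
  thus "enat (d + 1) \<le> x" using assms by (simp add: Suc_le_eq)
qed

lemma stopping_set_finite: "finite C \<Longrightarrow> stopping_set M R C S \<Longrightarrow> finite S"
  unfolding stopping_set_def using finite_subset by blast

lemma stopping_set_row_card_ge_2:
  assumes "finite S" "stopping_set M R C S" "r \<in> R" "j \<in> S" "M r j"
  shows "2 \<le> card {c\<in>S. M r c}"
proof -
  have "card {c\<in>S. M r c} \<noteq> 0" using assms(1,4,5) by auto
  moreover have "card {c\<in>S. M r c} \<noteq> 1" using assms(2,3) unfolding stopping_set_def by blast
  ultimately show ?thesis by linarith
qed

lemma stopping_set_incidence_card:
  fixes B :: "'a set set"
  assumes fin: "finite Q" "finite B"
    and blocks: "\<And>b. b \<in> B \<Longrightarrow> b \<subseteq> Q \<and> card b = k"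
    and inter: "\<And>b b'. b \<in> B \<Longrightarrow> b' \<in> B \<Longrightarrow> b \<noteq> b' \<Longrightarrow> card (b \<inter> b') \<le> l"
    and S: "stopping_set incidence Q B S"
  shows "k \<le> (card S - 1) * l"
proof -
  have SB: "S \<subseteq> B" and "S \<noteq> {}" using S unfolding stopping_set_def by blast+
  then obtain b where b: "b \<in> S" by blast
  have fS: "finite S" using stopping_set_finite[OF fin(2) S] .
  have bQ: "b \<subseteq> Q" and kb: "card b = k" using blocks SB b by blast+
  have cover: "b \<subseteq> (\<Union>b'\<in>S - {b}. b \<inter> b')"
  proof
    fix q assume q: "q \<in> b"
    have "2 \<le> card {c\<in>S. q \<in> c}"
      using stopping_set_row_card_ge_2[OF fS S _ b, of q] q bQ by (auto simp: incidence_def)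
    hence "\<not> {c\<in>S. q \<in> c} \<subseteq> {b}"
      using card_mono[of "{b}" "{c\<in>S. q \<in> c}"] by auto
    then obtain b' where "b' \<in> S" "q \<in> b'" "b' \<noteq> b" by blast
    thus "q \<in> (\<Union>b'\<in>S - {b}. b \<inter> b')" using q by blast
  qed
  have "finite (\<Union>b'\<in>S - {b}. b \<inter> b')"
    using fS bQ fin(1) finite_subset by blast
  hence "k \<le> card (\<Union>b'\<in>S - {b}. b \<inter> b')"
    using card_mono[OF _ cover] kb by simp
  also have "\<dots> \<le> (\<Sum>b'\<in>S - {b}. card (b \<inter> b'))"
    by (rule card_UN_le) (use fS in simp)
  also have "\<dots> \<le> card (S - {b}) * l"
    using sum_bounded_above[of "S - {b}" "\<lambda>b'. card (b \<inter> b')" l] inter SB b by auto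
  finally show ?thesis using fS b by simp
qed

lemma steiner_system_block_inter_card:
  assumes st: "steiner_system t k m Q B" and "b \<in> B" "b' \<in> B" "b \<noteq> b'"
  shows "card (b \<inter> b') \<le> t - 1"
proof (rule ccontr)
  have bQ: "b \<subseteq> Q" and uniq: "\<And>T. T \<subseteq> Q \<Longrightarrow> card T = t \<Longrightarrow> \<exists>!c. c \<in> B \<and> T \<subseteq> c"
    using st \<open>b \<in> B\<close> unfolding steiner_system_def by blast+
  assume "\<not> ?thesis"
  hence "t \<le> card (b \<inter> b')" by linarith
  then obtain T where T: "T \<subseteq> b \<inter> b'" "card T = t"
    by (meson obtain_subset_with_card_n)
  with bQ have "T \<subseteq> Q" by blast
  from uniq[OF this T(2)] T assms(2-4) show False by blast
qed

lemma nat_ceiling_divide_le: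
  assumes "0 < l" "k \<le> s * l"
  shows "nat \<lceil>real k / real l\<rceil> \<le> s"
proof -
  have "real k \<le> real s * real l" using assms(2) by (metis of_nat_le_iff of_nat_mult)
  hence "real k / real l \<le> real s" using assms(1) by (simp add: pos_divide_le_eq)
  thus ?thesis by (simp add: ceiling_le_iff nat_le_iff)
qed

theorem steiner_system_decodable:
  assumes "2 \<le> t" "steiner_system t k m Q B"
  shows "decodable (nat \<lceil>real k / real (t - 1)\<rceil>) incidence Q B"
proof (rule decodableI)
  fix S assume S: "stopping_set incidence Q B S"
  have fQ: "finite Q" and blocks: "\<And>b. b \<in> B \<Longrightarrow> b \<subseteq> Q \<and> card b = k"
    using assms(2) unfolding steiner_system_def by blast+
  have "B \<subseteq> Pow Q" using blocks by blast
  hence fB: "finite B" using fQ finite_subset by blast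
  have "k \<le> (card S - 1) * (t - 1)"
    using stopping_set_incidence_card[OF fQ fB blocks _ S]
      steiner_system_block_inter_card[OF assms(2)] by blast
  hence "nat \<lceil>real k / real (t - 1)\<rceil> \<le> card S - 1"
    using assms(1) by (intro nat_ceiling_divide_le) auto
  moreover have "S \<noteq> {}" "finite S"
    using S stopping_set_finite[OF fB S] unfolding stopping_set_def by auto
  ultimately show "nat \<lceil>real k / real (t - 1)\<rceil> < card S"
    using card_gt_0_iff[of S] by linarith
qed

text \<open>Row g i j records the i-th coordinate of column j.\<close>

lemma coordinate_matrix_stopping_set_card:
  fixes g :: "'i \<Rightarrow> 'c \<Rightarrow> 'r"
  assumes "finite C" "I \<noteq> {}"
    and incidence: "\<And>r j. j \<in> C \<Longrightarrow> M r j \<longleftrightarrow> (\<exists>i\<in>I. r = g i j)"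
    and rows: "\<And>i j. i \<in> I \<Longrightarrow> j \<in> C \<Longrightarrow> g i j \<in> R"
    and classes: "\<And>i i' j j'. i \<in> I \<Longrightarrow> i' \<in> I \<Longrightarrow> j \<in> C \<Longrightarrow> j' \<in> C \<Longrightarrow> g i j = g i' j' \<Longrightarrow> i = i'"
    and separating: "\<And>j j'. j \<in> C \<Longrightarrow> j' \<in> C \<Longrightarrow> (\<And>i. i \<in> I \<Longrightarrow> g i j = g i j') \<Longrightarrow> j = j'"
    and S: "stopping_set M R C S"
  shows "4 \<le> card S"
proof (rule ccontr)
  assume "\<not> ?thesis"
  hence small: "card S < 4" by simp
  have fS: "finite S" and SC: "S \<subseteq> C" and "S \<noteq> {}"
    using stopping_set_finite[OF assms(1) S] S unfolding stopping_set_def by blast+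
  then obtain j where j: "j \<in> S" by blast
  obtain i where i: "i \<in> I" using assms(2) by blast
  have fiber: "2 \<le> card {c\<in>S. g i c = g i a}" if i: "i \<in> I" and a: "a \<in> S" for i a
  proof -
    have "M (g i a) c \<longleftrightarrow> g i c = g i a" if c: "c \<in> S" for c
    proof
      assume "M (g i a) c"
      then obtain i' where "i' \<in> I" "g i a = g i' c" using incidence c SC by blast
      moreover from this have "i = i'" using classes i a c SC by blast
      ultimately show "g i c = g i a" by simp
    next
      assume "g i c = g i a"
      hence "\<exists>i'\<in>I. g i a = g i' c" using i by metis
      thus "M (g i a) c" using incidence c SC by blast
    qed
    hence "{c\<in>S. M (g i a) c} = {c\<in>S. g i c = g i a}" by blast
    moreover have aC: "a \<in> C" using a SC by blast
    moreover have "M (g i a) a" using incidence[OF aC] i by blast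
    ultimately show ?thesis
      using stopping_set_row_card_ge_2[OF fS S rows[OF i aC] a] by simp
  qed
  have coordinates_agree: "g i c = g i j" if i: "i \<in> I" and c: "c \<in> S" for i c
  proof (rule ccontr)
    assume "g i c \<noteq> g i j"
    hence "card {x\<in>S. g i x = g i c} + card {x\<in>S. g i x = g i j}
        = card ({x\<in>S. g i x = g i c} \<union> {x\<in>S. g i x = g i j})"
      by (intro card_Un_disjoint[symmetric]) (use fS in auto)
    also have "\<dots> \<le> card S" by (rule card_mono) (use fS in auto)
    finally show False using fiber[OF i c] fiber[OF i j] small by linarith
  qed
  have "c = j" if "c \<in> S" for c
    using separating[of c j] coordinates_agree[OF _ that] that j SC by blast
  hence "{x\<in>S. g i x = g i j} = {j}" using j by blast
  thus False using fiber[OF i j] by simp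
qed

text \<open>The columns j < q^3 are the points of the cube {0..<q}^3, read off from the base-q digits
  of j; row i * q + a records that the i-th digit is a.\<close>

definition cube_row :: "nat \<Rightarrow> nat \<Rightarrow> nat \<Rightarrow> nat" where
  "cube_row q i j = i * q + j div q ^ i mod q"

definition cube_matrix :: "nat \<Rightarrow> nat \<Rightarrow> nat \<Rightarrow> bool" where
  "cube_matrix q r j \<longleftrightarrow> (\<exists>i<3. r = cube_row q i j)"

lemma cube_row_bounds:
  assumes "0 < q"
  shows "i * q \<le> cube_row q i j" "cube_row q i j < Suc i * q"
  using assms by (simp_all add: cube_row_def)

lemma cube_row_eq_imp_eq:
  assumes "0 < q" "cube_row q i j = cube_row q i' j'"
  shows "i = i'"
proof -
  have "i * q < Suc i' * q" "i' * q < Suc i * q"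
    using cube_row_bounds[OF assms(1)] assms(2) by (metis le_less_trans)+
  thus ?thesis by (metis mult_less_cancel2 less_antisym not_less_eq)
qed

lemma base_digits_3:
  fixes j q :: nat
  assumes "j < q ^ 3"
  shows "j = j mod q + q * (j div q mod q) + q\<^sup>2 * (j div q\<^sup>2 mod q)"
proof -
  have "q ^ 3 = q\<^sup>2 * q" by (simp add: power3_eq_cube power2_eq_square)
  hence "j = j mod (q\<^sup>2 * q)" using assms by simp
  also have "\<dots> = q\<^sup>2 * (j div q\<^sup>2 mod q) + j mod (q * q)"
    by (simp add: mod_mult2_eq power2_eq_square)
  also have "j mod (q * q) = q * (j div q mod q) + j mod q"
    by (simp add: mod_mult2_eq)
  finally show ?thesis by simp
qed

lemma cube_rows_separate_columns:
  assumes "j < q ^ 3" "j' < q ^ 3" "\<And>i. i < 3 \<Longrightarrow> cube_row q i j = cube_row q i j'"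
  shows "j = j'"
proof -
  have "j div q ^ i mod q = j' div q ^ i mod q" if "i < 3" for i
    using assms(3)[OF that] by (simp add: cube_row_def)
  from this[of 0] this[of 1] this[of 2] show ?thesis
    using base_digits_3[OF assms(1)] base_digits_3[OF assms(2)] by (simp add: power2_eq_square)
qed

lemma cube_matrix_dk_decodable:
  assumes q: "0 < q" and n: "n \<le> q ^ 3"
  shows "dk_decodable 3 3 (cube_matrix q) {0..<3 * q} {0..<n}"
proof -
  have rows: "cube_row q i j \<in> {0..<3 * q}" if "i \<in> {..<3}" for i j
  proof -
    have "Suc i * q \<le> 3 * q" using that by (intro mult_le_mono1) simp
    thus ?thesis using less_le_trans[OF cube_row_bounds(2)[OF q, of i j]] by simp
  qed
  have "decodable 3 (cube_matrix q) {0..<3 * q} {0..<n}"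
  proof (rule decodableI)
    fix S assume S: "stopping_set (cube_matrix q) {0..<3 * q} {0..<n} S"
    have separating: "j = j'"
      if "j \<in> {0..<n}" "j' \<in> {0..<n}" "\<And>i. i \<in> {..<3} \<Longrightarrow> cube_row q i j = cube_row q i j'" for j j'
      using cube_rows_separate_columns[of j q j'] that n by simp
    have "4 \<le> card S"
    proof (rule coordinate_matrix_stopping_set_card[where g = "cube_row q" and I = "{..<3}",
          OF _ _ _ _ _ _ S])
      show "cube_matrix q r j \<longleftrightarrow> (\<exists>i\<in>{..<3}. r = cube_row q i j)" for r j
        by (auto simp: cube_matrix_def)
      show "i = i'" if "cube_row q i j = cube_row q i' j'" for i i' j j'
        using cube_row_eq_imp_eq[OF q that] .
    qed (use rows separating in \<open>simp_all add: lessThan_empty_iff\<close>)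
    thus "3 < card S" by simp
  qed
  moreover have "card {r\<in>{0..<3 * q}. cube_matrix q r j} = 3" for j
  proof -
    have "{r\<in>{0..<3 * q}. cube_matrix q r j} = (\<lambda>i. cube_row q i j) ` {..<3}"
      using rows by (auto simp: cube_matrix_def)
    moreover have "inj_on (\<lambda>i. cube_row q i j) {..<3}"
      using cube_row_eq_imp_eq[OF q] by (meson inj_onI)
    ultimately show ?thesis by (simp add: card_image)
  qed
  ultimately show ?thesis unfolding dk_decodable_def by blast
qed

lemma mstar_33_le_cube:
  assumes "0 < q" "n \<le> q ^ 3"
  shows "mstar n 3 3 \<le> 3 * q"
  unfolding mstar_def by (rule Least_le) (use cube_matrix_dk_decodable[OF assms] in blast)

lemma six_mult_le_square_if_root_le:
  fixes c n :: nat
  assumes "(1 + sqrt (1 + 24 * real n)) / 2 \<le> real c"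
  shows "6 * n \<le> c\<^sup>2"
proof -
  have "sqrt (1 + 24 * real n) \<le> 2 * real c - 1" using assms by simp
  hence "(sqrt (1 + 24 * real n))\<^sup>2 \<le> (2 * real c - 1)\<^sup>2" by (rule power_mono) simp
  hence "1 + 24 * real n \<le> (2 * real c - 1)\<^sup>2" by simp
  hence "real (6 * n) \<le> real (c\<^sup>2)" by (simp add: power2_eq_square algebra_simps)
  thus ?thesis by linarith
qed

lemma le_cube_if_six_mult_le_square:
  fixes c n :: nat
  assumes "6 * n \<le> c\<^sup>2"
  shows "n \<le> (c div 3 + 1) ^ 3"
proof (cases "3 \<le> c")
  case True
  let ?q = "c div 3 + 1"
  have "2 \<le> ?q" using True by simp
  have "c\<^sup>2 \<le> (3 * ?q)\<^sup>2" by (rule power_mono) simp_all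
  also have "\<dots> = 9 * ?q\<^sup>2" unfolding power_mult_distrib by simp
  also have "\<dots> \<le> (6 * ?q) * ?q\<^sup>2" using \<open>2 \<le> ?q\<close> by (intro mult_le_mono1) simp
  also have "\<dots> = 6 * ?q ^ 3" by (simp only: power2_eq_square power3_eq_cube mult.assoc)
  finally show ?thesis using assms by simp
next
  case False
  hence "c\<^sup>2 \<le> 2\<^sup>2" by (intro power_mono) simp_all
  thus ?thesis using assms by simp
qed

lemma mstar_33_le_ceiling: "int (mstar n 3 3) \<le> \<lceil>(1 + sqrt (1 + 24 * real n)) / 2\<rceil> + 3"
proof -
  define x where "x = (1 + sqrt (1 + 24 * real n)) / 2"
  have "0 \<le> x" unfolding x_def by simp
  then obtain c :: nat where c: "int c = \<lceil>x\<rceil>"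
    by (metis ceiling_mono ceiling_zero nonneg_int_cases)
  have "x \<le> real c" using c by linarith
  hence "n \<le> (c div 3 + 1) ^ 3"
    unfolding x_def by (intro le_cube_if_six_mult_le_square six_mult_le_square_if_root_le)
  hence "mstar n 3 3 \<le> 3 * (c div 3 + 1)" by (rule mstar_33_le_cube[rotated]) simp
  also have "\<dots> \<le> c + 3" by simp
  finally have "int (mstar n 3 3) \<le> int c + 3" by simp
  thus ?thesis using c unfolding x_def by simp
qed

theorem corollary4p5:
  fixes t k m :: nat and Q :: "'a set" and B :: "'a set set"
  assumes "t \<ge> 2"
    and "steiner_system t k m Q B"
  shows "decodable (nat \<lceil>real k / real (t - 1)\<rceil>) incidence Q B
         \<and> (\<forall>n::nat. n \<ge> 1 \<longrightarrow>
              int (mstar n 3 3) \<le> \<lceil>(1 + sqrt (1 + 24 * real n)) / 2\<rceil> + 3)"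
  using steiner_system_decodable[OF assms] mstar_33_le_ceiling by blast

end
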